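(* In the setting where $M$ has $3$ edges, $p,q\in(0,1]$, $(\omega_e)_{e\in E_\varGamma}$ and $(\omega_{e,j,g})$ are mutually independent Bernoulli variables with means $p$ and $q$ respectively, and $$\widehat C_M=\frac{1}{3pq}\sum_{e\in E_\varGamma}\sum_{j=1}^{3}\sum_{g\in E_j(e)}\omega_e\,\omega_{e,j,g}\,\eta(W_{e,j,g}),$$ for every $\varepsilon>0$ (assuming $C_M>0$) we have $\Pr\big[|\widehat C_M-C_M|\ge\varepsilon C_M\big]\le\frac{1-pq}{pq\,\varepsilon^2}$.
   Context: A temporal graph $\varGamma=(V_\varGamma,E_\varGamma)$ consists of a finite vertex set $V_\varGamma$ and a finite sequence $E_\varGamma$ of $m$ temporal edges $(u,v,t)$, $u,v\in V_\varGamma$, $t\in\mathbb{R}^+$, with distinct timestamps. A temporal motif $M$ is an ordered sequence of $l$ directed edges $\langle e'_1=(u'_1,v'_1),\dots,e'_l=(u'_l,v'_l)\rangle$ on a vertex set $V_M$ whose underlying graph is connected; here $l=3$ (and $|V_M|=3$). Fix $\delta\ge0$. A sequence $\langle (w_1,x_1,t_1),\dots,(w_l,x_l,t_l)\rangle$ of edges of $E_\varGamma$ with $t_1<\dots<t_l$ is a $\delta$-instance of $M$ if there is a bijection $f$ from its vertices to $V_M$ with $f(w_i)=u'_i$, $f(x_i)=v'_i$ for all $i$, and $t_l-t_1\le\delta$. $C_M$ is the number of $\delta$-instances of $M$ in $\varGamma$; $\eta_j(e)$ is the number of $\delta$-instances of $M$ whose $j$-th edge is $e$. Wedge data: for each $e\in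 E_\varGamma$ and $j\in\{1,2,3\}$ there is a finite set $E_j(e)\subseteq E_\varGamma$ and for each $g\in E_j(e)$ a nonnegative integer $\eta(W_{e,j,g})$ (the number of $\delta$-instances of $M$ containing the temporal wedge formed by $e$ and $g$, with $e$ mapped to $e'_j$), such that $\sum_{g\in E_j(e)}\eta(W_{e,j,g})=\eta_j(e)$. *)

theory Defs
  imports "HOL-Probability.Probability"
begin

text \<open>Temporal graph: a finite list of temporal edges (u, v, t), indexed 0..m-1.
  Temporal edges are identified with their indices (timestamps are distinct).\<close>

type_synonym 'v tedge = "'v \<times> 'v \<times> real"

definition src :: "'v tedge \<Rightarrow> 'v" where "src e = fst e"
definition dst :: "'v tedge \<Rightarrow> 'v" where "dst e = fst (snd e)"
definition tstamp :: "'v tedge \<Rightarrow> real" where "tstamp e = snd (snd e)"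

definition temporal_graph :: "'v tedge list \<Rightarrow> bool" where
  "temporal_graph G \<longleftrightarrow> distinct (map tstamp G) \<and> (\<forall>e\<in>set G. tstamp e > 0)"

text \<open>Motif: list of directed edges e'_1, ..., e'_l (e'_j = Mo ! (j-1)).\<close>

definition motif_verts :: "('m \<times> 'm) list \<Rightarrow> 'm set" where
  "motif_verts Mo = fst ` set Mo \<union> snd ` set Mo"

definition motif_adj :: "('m \<times> 'm) list \<Rightarrow> 'm \<Rightarrow> 'm \<Rightarrow> bool" where
  "motif_adj Mo a b \<longleftrightarrow> (a, b) \<in> set Mo \<or> (b, a) \<in> set Mo"

definition motif_connected :: "('m \<times> 'm) list \<Rightarrow> bool" where
  "motif_connected Mo \<longleftrightarrow>
     (\<forall>a\<in>motif_verts Mo. \<forall>b\<in>motif_verts Mo. (motif_adj Mo)\<^sup>*\<^sup>* a b)"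

definition is_motif :: "nat \<Rightarrow> ('m \<times> 'm) list \<Rightarrow> bool" where
  "is_motif l Mo \<longleftrightarrow> length Mo = l \<and> motif_connected Mo"

definition inst_verts :: "'v tedge list \<Rightarrow> nat list \<Rightarrow> 'v set" where
  "inst_verts G is = (\<lambda>i. src (G ! i)) ` set is \<union> (\<lambda>i. dst (G ! i)) ` set is"

definition is_delta_instance ::
  "'v tedge list \<Rightarrow> ('m \<times> 'm) list \<Rightarrow> real \<Rightarrow> nat list \<Rightarrow> bool" where
  "is_delta_instance G Mo \<delta> is \<longleftrightarrow>
     length is = length Mo \<and> length is > 0 \<and>
     (\<forall>i\<in>set is. i < length G) \<and>
     (\<forall>k. Suc k < length is \<longrightarrow> tstamp (G ! (is ! k)) < tstamp (G ! (is ! Suc k))) \<and>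
     (\<exists>f. bij_betw f (inst_verts G is) (motif_verts Mo) \<and>
          (\<forall>k < length is. f (src (G ! (is ! k))) = fst (Mo ! k) \<and>
                           f (dst (G ! (is ! k))) = snd (Mo ! k))) \<and>
     tstamp (G ! (is ! (length is - 1))) - tstamp (G ! (is ! 0)) \<le> \<delta>"

definition delta_instances :: "'v tedge list \<Rightarrow> ('m \<times> 'm) list \<Rightarrow> real \<Rightarrow> nat list set" where
  "delta_instances G Mo \<delta> = {is. is_delta_instance G Mo \<delta> is}"

definition motif_count :: "'v tedge list \<Rightarrow> ('m \<times> 'm) list \<Rightarrow> real \<Rightarrow> nat" where
  "motif_count G Mo \<delta> = card (delta_instances G Mo \<delta>)"

definition eta :: "'v tedge list \<Rightarrow> ('m \<times> 'm) list \<Rightarrow> real \<Rightarrow> nat \<Rightarrow> nat \<Rightarrow> nat" where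
  "eta G Mo \<delta> j e = card {is \<in> delta_instances G Mo \<delta>. is ! (j - 1) = e}"

definition C_hat ::
  "nat \<Rightarrow> real \<Rightarrow> real \<Rightarrow> (nat \<Rightarrow> nat \<Rightarrow> nat set) \<Rightarrow> (nat \<Rightarrow> nat \<Rightarrow> nat \<Rightarrow> nat)
   \<Rightarrow> (nat \<Rightarrow> 'w \<Rightarrow> bool) \<Rightarrow> (nat \<Rightarrow> nat \<Rightarrow> nat \<Rightarrow> 'w \<Rightarrow> bool) \<Rightarrow> 'w \<Rightarrow> real" where
  "C_hat m p q Ew etaW \<omega> \<omega>' x =
     1 / (3 * p * q) *
     (\<Sum>e<m. \<Sum>j\<in>{1..3}. \<Sum>g\<in>Ew e j.
        of_bool (\<omega> e x) * of_bool (\<omega>' e j g x) * real (etaW e j g))"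

definition sample_index :: "nat \<Rightarrow> (nat \<Rightarrow> nat \<Rightarrow> nat set) \<Rightarrow> (nat + nat \<times> nat \<times> nat) set" where
  "sample_index m Ew = Inl ` {..<m} \<union> {Inr (e, j, g) | e j g. e < m \<and> j \<in> {1..3} \<and> g \<in> Ew e j}"

definition sample_var ::
  "(nat \<Rightarrow> 'w \<Rightarrow> bool) \<Rightarrow> (nat \<Rightarrow> nat \<Rightarrow> nat \<Rightarrow> 'w \<Rightarrow> bool) \<Rightarrow> nat + nat \<times> nat \<times> nat \<Rightarrow> 'w \<Rightarrow> bool" where
  "sample_var \<omega> \<omega>' i = (case i of Inl e \<Rightarrow> \<omega> e | Inr (e, j, g) \<Rightarrow> \<omega>' e j g)"

end

theory Submission
  imports Defs
begin

text \<open>Each product \<open>\<omega>\<^sub>e \<omega>\<^sub>e\<^sub>,\<^sub>j\<^sub>,\<^sub>g\<close> is a Bernoulli variable of mean \<open>pq\<close>, and summing the wedge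
  counts over \<open>g\<close>, \<open>e\<close> and the three positions \<open>j\<close> counts every instance three times;
  hence \<open>\<widehat>C\<^sub>M\<close> is unbiased. Moreover \<open>0 \<le> \<widehat>C\<^sub>M \<le> C\<^sub>M/(pq)\<close>, so
  \<open>E[\<widehat>C\<^sub>M\<^sup>2] \<le> C\<^sub>M/(pq) \<cdot> E[\<widehat>C\<^sub>M]\<close> and \<open>Var \<widehat>C\<^sub>M \<le> C\<^sub>M\<^sup>2 (1 - pq)/(pq)\<close>;
  Chebyshev's inequality finishes the proof.\<close>

lemma finite_delta_instances: "finite (delta_instances G Mo \<delta>)"
proof (rule finite_subset)
  show "delta_instances G Mo \<delta> \<subseteq> {xs. set xs \<subseteq> {..<length G} \<and> length xs = length Mo}"
    by (auto simp: delta_instances_def is_delta_instance_def)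
  show "finite {xs. set xs \<subseteq> {..<length G} \<and> length xs = length Mo}"
    by (rule finite_lists_length_eq) simp
qed

lemma sum_eta_eq_motif_count:
  assumes "1 \<le> j" "j \<le> length Mo"
  shows "(\<Sum>e<length G. eta G Mo \<delta> j e) = motif_count G Mo \<delta>"
proof -
  let ?D = "delta_instances G Mo \<delta>"
  have "?D = (\<Union>e<length G. {is \<in> ?D. is ! (j - 1) = e})"
    using assms by (force simp: delta_instances_def is_delta_instance_def)
  then have "card ?D = card (\<Union>e<length G. {is \<in> ?D. is ! (j - 1) = e})"
    by simp
  also have "\<dots> = (\<Sum>e<length G. card {is \<in> ?D. is ! (j - 1) = e})"
    by (rule card_UN_disjoint) (auto simp: finite_delta_instances)
  finally show ?thesis by (simp add: motif_count_def eta_def)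
qed

lemma wedge_weight_total:
  assumes "length Mo = 3"
    and "\<And>e j. e < length G \<Longrightarrow> j \<in> {1..3} \<Longrightarrow> (\<Sum>g\<in>Ew e j. etaW e j g) = eta G Mo \<delta> j e"
  shows "(\<Sum>e<length G. \<Sum>j\<in>{1..3}. \<Sum>g\<in>Ew e j. real (etaW e j g)) = 3 * real (motif_count G Mo \<delta>)"
proof -
  have "(\<Sum>e<length G. \<Sum>j\<in>{1..3}. \<Sum>g\<in>Ew e j. real (etaW e j g))
      = (\<Sum>e<length G. \<Sum>j\<in>{1..3}. real (eta G Mo \<delta> j e))"
    by (intro sum.cong refl) (simp add: assms(2) flip: of_nat_sum)
  also have "\<dots> = (\<Sum>j\<in>{1..3}. real (\<Sum>e<length G. eta G Mo \<delta> j e))"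
    by (simp add: sum.swap[of _ "{..<length G}"])
  also have "\<dots> = (\<Sum>j\<in>{1..3::nat}. real (motif_count G Mo \<delta>))"
    using assms(1) by (intro sum.cong refl) (simp add: sum_eta_eq_motif_count)
  finally show ?thesis by simp
qed

lemma (in prob_space) expectation_of_bool:
  assumes "Measurable.pred M P"
  shows "expectation (\<lambda>x. of_bool (P x) :: real) = prob {x\<in>space M. P x}"
proof -
  have "expectation (\<lambda>x. of_bool (P x) :: real) = expectation (indicator {x\<in>space M. P x})"
    by (rule Bochner_Integration.integral_cong) (auto simp: indicator_def)
  then show ?thesis
    using assms by (simp add: pred_def)
qed

lemma (in prob_space) expectation_of_bool_mult_indep:
  assumes indep: "indep_vars (\<lambda>_. count_space UNIV) X I" and "a \<in> I" "b \<in> I" "a \<noteq> b"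
  shows "expectation (\<lambda>x. of_bool (X a x) * of_bool (X b x) :: real)
          = prob {x\<in>space M. X a x} * prob {x\<in>space M. X b x}"
proof -
  have indep_ab: "indep_vars (\<lambda>_. count_space UNIV) X {a, b}"
    using indep_vars_subset[OF indep] assms by auto
  then have [measurable]: "\<And>i. i \<in> {a, b} \<Longrightarrow> Measurable.pred M (X i)"
    by (auto simp: indep_vars_def)
  have "indep_vars (\<lambda>_. borel) (\<lambda>i x. of_bool (X i x) :: real) {a, b}"
    by (rule indep_vars_compose2[OF indep_ab]) auto
  then have "expectation (\<lambda>x. \<Prod>i\<in>{a, b}. of_bool (X i x) :: real)
           = (\<Prod>i\<in>{a, b}. expectation (\<lambda>x. of_bool (X i x) :: real))"
    by (rule indep_vars_lebesgue_integral[rotated])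
       (auto intro!: integrable_const_bound[where B=1])
  then show ?thesis
    using assms by (simp add: expectation_of_bool)
qed

lemma (in prob_space) variance_le_of_bounded:
  fixes Z :: "'a \<Rightarrow> real"
  assumes [measurable]: "random_variable borel Z"
    and bounds: "\<And>x. x \<in> space M \<Longrightarrow> 0 \<le> Z x \<and> Z x \<le> B"
  shows "variance Z \<le> (B - expectation Z) * expectation Z"
proof -
  let ?c = "expectation Z"
  have "integrable M Z"
    using bounds by (intro integrable_const_bound[where B=B]) auto
  moreover have "integrable M (\<lambda>x. (Z x - ?c)\<^sup>2)"
  proof (intro integrable_const_bound[where B="(B + \<bar>?c\<bar>)\<^sup>2"] AE_I2)
    fix x assume "x \<in> space M"
    then have "\<bar>Z x - ?c\<bar> \<le> B + \<bar>?c\<bar>"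
      using bounds[of x] by linarith
    then have "\<bar>Z x - ?c\<bar>\<^sup>2 \<le> (B + \<bar>?c\<bar>)\<^sup>2"
      by (intro power_mono) auto
    then show "norm ((Z x - ?c)\<^sup>2) \<le> (B + \<bar>?c\<bar>)\<^sup>2"
      by simp
  qed simp
  ultimately have "variance Z \<le> expectation (\<lambda>x. (B - 2 * ?c) * Z x + ?c\<^sup>2)"
  proof (intro integral_mono)
    fix x assume "x \<in> space M"
    then have "Z x * Z x \<le> B * Z x"
      using bounds by (intro mult_right_mono) auto
    then show "(Z x - ?c)\<^sup>2 \<le> (B - 2 * ?c) * Z x + ?c\<^sup>2"
      by (simp add: power2_eq_square algebra_simps)
  qed auto
  also have "\<dots> = (B - expectation Z) * expectation Z"
    using \<open>integrable M Z\<close> by (simp add: prob_space power2_eq_square algebra_simps)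
  finally show ?thesis .
qed

lemma (in prob_space) prob_relative_deviation_le_of_bounded:
  fixes Z :: "'a \<Rightarrow> real"
  assumes Z: "random_variable borel Z"
    and bounds: "\<And>x. x \<in> space M \<Longrightarrow> 0 \<le> Z x \<and> Z x \<le> B"
    and mean: "expectation Z = c" and "c > 0" "\<epsilon> > 0"
  shows "prob {x\<in>space M. \<bar>Z x - c\<bar> \<ge> \<epsilon> * c} \<le> (B - c) / (c * \<epsilon>\<^sup>2)"
proof -
  have "integrable M (\<lambda>x. Z x ^ 2)"
    using Z bounds by (intro integrable_const_bound[where B="B\<^sup>2"] AE_I2) (auto intro!: power_mono)
  then have "prob {x\<in>space M. \<bar>Z x - c\<bar> \<ge> \<epsilon> * c} \<le> variance Z / (\<epsilon> * c)\<^sup>2"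
    using Chebyshev_inequality[OF Z, of "\<epsilon> * c"] mean assms by simp
  also have "\<dots> \<le> (B - c) * c / (\<epsilon> * c)\<^sup>2"
    using variance_le_of_bounded[OF Z bounds] mean by (intro divide_right_mono) auto
  also have "\<dots> = (B - c) / (c * \<epsilon>\<^sup>2)"
    using assms by (simp add: power2_eq_square field_simps)
  finally show ?thesis .
qed

lemma C_hat_eq_sum:
  "C_hat m p q Ew etaW \<omega> \<omega>' x = (\<Sum>e<m. \<Sum>j\<in>{1..3}. \<Sum>g\<in>Ew e j.
      of_bool (\<omega> e x) * of_bool (\<omega>' e j g x) * real (etaW e j g)) / (3 * p * q)"
  unfolding C_hat_def by (simp only: times_divide_eq_left mult_1_left)

lemma C_hat_bounds:
  assumes "p > 0" "q > 0"
  shows "0 \<le> C_hat m p q Ew etaW \<omega> \<omega>' x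
    \<and> C_hat m p q Ew etaW \<omega> \<omega>' x \<le> (\<Sum>e<m. \<Sum>j\<in>{1..3}. \<Sum>g\<in>Ew e j. real (etaW e j g)) / (3 * p * q)"
  unfolding C_hat_eq_sum using assms
  by (auto intro!: sum_nonneg divide_nonneg_nonneg divide_right_mono sum_mono)

lemma (in prob_space) pred_sample_vars:
  assumes "indep_vars (\<lambda>_. count_space UNIV) (sample_var \<omega> \<omega>') (sample_index m Ew)"
  shows "e < m \<Longrightarrow> Measurable.pred M (\<omega> e)"
    and "e < m \<Longrightarrow> j \<in> {1..3} \<Longrightarrow> g \<in> Ew e j \<Longrightarrow> Measurable.pred M (\<omega>' e j g)"
proof -
  have rv: "Measurable.pred M (sample_var \<omega> \<omega>' i)" if "i \<in> sample_index m Ew" for i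
    using assms that by (auto simp: indep_vars_def)
  show "e < m \<Longrightarrow> Measurable.pred M (\<omega> e)"
    using rv[of "Inl e"] by (simp add: sample_index_def sample_var_def)
  assume "e < m" "j \<in> {1..3}" "g \<in> Ew e j"
  then have "Inr (e, j, g) \<in> sample_index m Ew"
    by (simp add: sample_index_def)
  from rv[OF this] show "Measurable.pred M (\<omega>' e j g)"
    by (simp add: sample_var_def)
qed

lemma (in prob_space) measurable_C_hat:
  assumes "indep_vars (\<lambda>_. count_space UNIV) (sample_var \<omega> \<omega>') (sample_index m Ew)"
  shows "random_variable borel (C_hat m p q Ew etaW \<omega> \<omega>')"
proof -
  have "(\<lambda>x. of_bool (\<omega> e x) * of_bool (\<omega>' e j g x) * real (etaW e j g) :: real) \<in> borel_measurable M"
    if "e < m" "j \<in> {1..3}" "g \<in> Ew e j" for e j g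
  proof -
    note [measurable] = pred_sample_vars(1)[OF assms that(1)] pred_sample_vars(2)[OF assms that]
    show ?thesis by measurable
  qed
  then show ?thesis
    unfolding C_hat_def by (intro borel_measurable_times[OF borel_measurable_const] borel_measurable_sum) auto
qed

lemma (in prob_space) expectation_C_hat:
  assumes indep: "indep_vars (\<lambda>_. count_space UNIV) (sample_var \<omega> \<omega>') (sample_index m Ew)"
    and "p > 0" "q > 0"
    and bern_p: "\<And>e. e < m \<Longrightarrow> prob {x \<in> space M. \<omega> e x} = p"
    and bern_q: "\<And>e j g. e < m \<Longrightarrow> j \<in> {1..3} \<Longrightarrow> g \<in> Ew e j \<Longrightarrow>
                   prob {x \<in> space M. \<omega>' e j g x} = q"
  shows "expectation (C_hat m p q Ew etaW \<omega> \<omega>')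
           = (\<Sum>e<m. \<Sum>j\<in>{1..3}. \<Sum>g\<in>Ew e j. real (etaW e j g)) / 3"
proof -
  define Y where "Y e j g x = (of_bool (\<omega> e x) * of_bool (\<omega>' e j g x) :: real)" for e j g x
  have EY: "expectation (Y e j g) = p * q" if "e < m" "j \<in> {1..3}" "g \<in> Ew e j" for e j g
    using expectation_of_bool_mult_indep[OF indep, of "Inl e" "Inr (e, j, g)"] that bern_p bern_q
    by (auto simp: Y_def[abs_def] sample_index_def sample_var_def)
  have IY: "integrable M (\<lambda>x. Y e j g x * real (etaW e j g))"
    if "e < m" "j \<in> {1..3}" "g \<in> Ew e j" for e j g
    using pred_sample_vars[OF indep] that unfolding Y_def
    by (intro integrable_const_bound[where B="real (etaW e j g)"]) auto
  have "expectation (\<lambda>x. \<Sum>e<m. \<Sum>j\<in>{1..3}. \<Sum>g\<in>Ew e j. Y e j g x * real (etaW e j g))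
      = (\<Sum>e<m. expectation (\<lambda>x. \<Sum>j\<in>{1..3}. \<Sum>g\<in>Ew e j. Y e j g x * real (etaW e j g)))"
    using IY by (intro Bochner_Integration.integral_sum Bochner_Integration.integrable_sum) auto
  also have "\<dots> = (\<Sum>e<m. \<Sum>j\<in>{1..3}. expectation (\<lambda>x. \<Sum>g\<in>Ew e j. Y e j g x * real (etaW e j g)))"
    using IY by (intro sum.cong refl Bochner_Integration.integral_sum Bochner_Integration.integrable_sum) auto
  also have "\<dots> = (\<Sum>e<m. \<Sum>j\<in>{1..3}. \<Sum>g\<in>Ew e j. expectation (\<lambda>x. Y e j g x * real (etaW e j g)))"
    using IY by (intro sum.cong refl Bochner_Integration.integral_sum) auto
  also have "\<dots> = (\<Sum>e<m. \<Sum>j\<in>{1..3}. \<Sum>g\<in>Ew e j. p * q * real (etaW e j g))"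
    by (intro sum.cong refl) (simp add: EY)
  finally show ?thesis
    using assms(2,3) unfolding C_hat_eq_sum[abs_def] Y_def
    by (simp add: sum_distrib_left[symmetric])
qed

theorem mainTheorem6:
  fixes G :: "'v tedge list" and Mo :: "('m \<times> 'm) list" and \<delta> :: real
    and Ew :: "nat \<Rightarrow> nat \<Rightarrow> nat set" and etaW :: "nat \<Rightarrow> nat \<Rightarrow> nat \<Rightarrow> nat"
    and M :: "'w measure" and p q \<epsilon> :: real
    and \<omega> :: "nat \<Rightarrow> 'w \<Rightarrow> bool" and \<omega>' :: "nat \<Rightarrow> nat \<Rightarrow> nat \<Rightarrow> 'w \<Rightarrow> bool"
  assumes TG: "temporal_graph G"
    and Mot: "is_motif 3 Mo" and V3: "card (motif_verts Mo) = 3"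
    and delta: "\<delta> \<ge> 0"
    and Ew_sub: "\<And>e j. e < length G \<Longrightarrow> j \<in> {1..3} \<Longrightarrow> Ew e j \<subseteq> {..<length G} \<and> finite (Ew e j)"
    and wedge_sum: "\<And>e j. e < length G \<Longrightarrow> j \<in> {1..3} \<Longrightarrow>
                      (\<Sum>g\<in>Ew e j. etaW e j g) = eta G Mo \<delta> j e"
    and P: "prob_space M"
    and pq: "0 < p" "p \<le> 1" "0 < q" "q \<le> 1"
    and indep: "prob_space.indep_vars M (\<lambda>_. count_space UNIV) (sample_var \<omega> \<omega>')
                  (sample_index (length G) Ew)"
    and bern_p: "\<And>e. e < length G \<Longrightarrow> measure M {x \<in> space M. \<omega> e x} = p"
    and bern_q: "\<And>e j g. e < length G \<Longrightarrow> j \<in> {1..3} \<Longrightarrow> g \<in> Ew e j \<Longrightarrow>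
                   measure M {x \<in> space M. \<omega>' e j g x} = q"
    and Cpos: "motif_count G Mo \<delta> > 0"
    and eps: "\<epsilon> > 0"
  shows "measure M {x \<in> space M.
            \<bar>C_hat (length G) p q Ew etaW \<omega> \<omega>' x - real (motif_count G Mo \<delta>)\<bar>
              \<ge> \<epsilon> * real (motif_count G Mo \<delta>)}
         \<le> (1 - p * q) / (p * q * \<epsilon>\<^sup>2)"
proof -
  interpret prob_space M by (rule P)
  let ?C = "real (motif_count G Mo \<delta>)"
  let ?Z = "C_hat (length G) p q Ew etaW \<omega> \<omega>'"
  have total: "(\<Sum>e<length G. \<Sum>j\<in>{1..3}. \<Sum>g\<in>Ew e j. real (etaW e j g)) = 3 * ?C"
    using Mot wedge_sum by (intro wedge_weight_total) (auto simp: is_motif_def)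
  have "expectation ?Z = (\<Sum>e<length G. \<Sum>j\<in>{1..3}. \<Sum>g\<in>Ew e j. real (etaW e j g)) / 3"
    by (rule expectation_C_hat[OF indep pq(1,3) bern_p bern_q])
  then have "expectation ?Z = ?C"
    using total by simp
  moreover have "0 \<le> ?Z x \<and> ?Z x \<le> ?C / (p * q)" for x
    using C_hat_bounds[OF pq(1,3), of "length G" Ew etaW \<omega> \<omega>' x] total by simp
  ultimately have "prob {x\<in>space M. \<bar>?Z x - ?C\<bar> \<ge> \<epsilon> * ?C} \<le> (?C / (p * q) - ?C) / (?C * \<epsilon>\<^sup>2)"
    using Cpos eps by (intro prob_relative_deviation_le_of_bounded measurable_C_hat[OF indep]) auto
  also have "\<dots> = (1 - p * q) / (p * q * \<epsilon>\<^sup>2)"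
    using Cpos pq eps by (simp add: field_simps)
  finally show ?thesis .
qed

end
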